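(* For $\epsilon$ sufficiently small there is $C$ (independent of $\epsilon$ and $u$) such that every $u\in\mathcal H^a_0(0,1)$ satisfies $\|u\|_{L^2(0,1)}\le C\|a^2u_s\|_{L^2(0,1)}$.
   Context: Admissible radius $a:[0,1]\to[0,1]$: $a\in C^2[0,1)$, $\sup_{[0,1)}|aa'|<\infty$, $\sup_{[0,1)}|a^3a''|<\infty$, $\|a\|_\infty=1$, $a\ge a_0>0$ on $[0,1-\delta]$ for some $\delta>0$, and $|a(s)-\sqrt{1-s^2}|\le C\epsilon^2\sqrt{1-s^2}$ for $s>1-\delta$. $\mathcal H^a(0,1)=\{v\in L^2(0,1):a^2v_s\in L^2(0,1)\}$ (its elements are continuous on $[0,1)$), and $\mathcal H^a_0(0,1)=\{\gamma\in\mathcal H^a(0,1):\gamma(0)=0\}$. *)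

theory Defs
  imports "HOL-Analysis.Analysis"
begin

definition admissible_radius :: "real \<Rightarrow> real \<Rightarrow> real \<Rightarrow> real \<Rightarrow> (real \<Rightarrow> real) \<Rightarrow> bool" where
  "admissible_radius eps \<delta> a0 C0 a \<longleftrightarrow>
     \<delta> > 0 \<and> a0 > 0 \<and>
     (\<forall>s\<in>{0..1}. 0 \<le> a s \<and> a s \<le> 1) \<and>
     (\<exists>a' a''. (\<forall>s\<in>{0..<1}. (a has_real_derivative a' s) (at s within {0..<1}) \<and>
                             (a' has_real_derivative a'' s) (at s within {0..<1})) \<and>
               continuous_on {0..<1} a'' \<and>
               bounded ((\<lambda>s. a s * a' s) ` {0..<1}) \<and>
               bounded ((\<lambda>s. a s ^ 3 * a'' s) ` {0..<1})) \<and>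
     (SUP s\<in>{0..1}. \<bar>a s\<bar>) = 1 \<and>
     (\<forall>s\<in>{0..1-\<delta>}. a s \<ge> a0) \<and>
     (\<forall>s\<in>{1-\<delta><..1}. \<bar>a s - sqrt (1 - s\<^sup>2)\<bar> \<le> C0 * eps\<^sup>2 * sqrt (1 - s\<^sup>2))"

definition sq_int01 :: "(real \<Rightarrow> real) \<Rightarrow> bool" where
  "sq_int01 f \<longleftrightarrow> f \<in> borel_measurable lborel \<and>
      set_integrable lborel {0<..<1} (\<lambda>s. (f s)\<^sup>2)"

definition L2norm01 :: "(real \<Rightarrow> real) \<Rightarrow> real" where
  "L2norm01 f = sqrt (LINT s:{0<..<1}|lborel. (f s)\<^sup>2)"

text \<open>g is the (weak) derivative of u on [0,1): u is the continuous
  (locally absolutely continuous) representative, u(s) = u(0) + int_0^s g.\<close>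
definition weak_deriv01 :: "(real \<Rightarrow> real) \<Rightarrow> (real \<Rightarrow> real) \<Rightarrow> bool" where
  "weak_deriv01 u g \<longleftrightarrow>
     (\<forall>s\<in>{0..<1}. set_integrable lborel {0..s} g \<and>
                   u s = u 0 + (LINT t:{0..s}|lborel. g t))"

definition in_Ha :: "(real \<Rightarrow> real) \<Rightarrow> (real \<Rightarrow> real) \<Rightarrow> (real \<Rightarrow> real) \<Rightarrow> bool" where
  "in_Ha a u g \<longleftrightarrow> sq_int01 u \<and> weak_deriv01 u g \<and> sq_int01 (\<lambda>s. (a s)\<^sup>2 * g s)"

definition in_Ha0 :: "(real \<Rightarrow> real) \<Rightarrow> (real \<Rightarrow> real) \<Rightarrow> (real \<Rightarrow> real) \<Rightarrow> bool" where
  "in_Ha0 a u g \<longleftrightarrow> in_Ha a u g \<and> u 0 = 0"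

end

theory Submission
  imports Defs
begin

text \<open>
  Admissibility gives \<open>a\<^sup>2 \<ge> a0\<^sup>2\<close> away from \<open>s = 1\<close> and, once \<open>C0 \<epsilon>\<^sup>2 \<le> 1/2\<close>,
  \<open>a\<^sup>2 \<ge> (1 - s\<^sup>2)/4 \<ge> (1 - s)/4\<close> near it. Hence \<open>a(s)\<^sup>2 \<ge> c (1 - s)\<close> on \<open>[0,1)\<close> with
  \<open>c = min a0\<^sup>2 (1/4)\<close>, and the claim with \<open>C = 2/c\<close> follows from the Hardy inequality
  \<open>\<integral>\<^sub>0\<^sup>1 u\<^sup>2 \<le> 4 \<integral>\<^sub>0\<^sup>1 (1 - t)\<^sup>2 u'\<^sup>2\<close> for \<open>u(0) = 0\<close>. To prove it, Cauchy-Schwarz with the weight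
  \<open>w(t) = (1 - t)^(3/2)\<close> gives \<open>u(s)\<^sup>2 \<le> 2 (1 - s)^(-1/2) \<integral>\<^sub>0\<^sup>s w u'\<^sup>2\<close>; integrating in \<open>s\<close>
  and exchanging the order of integration produces \<open>\<integral>\<^sub>t\<^sup>1 2 (1 - s)^(-1/2) ds = 4 (1 - t)^(1/2)\<close>,
  and \<open>w(t) \<cdot> 4 (1 - t)^(1/2) = 4 (1 - t)\<^sup>2\<close>.
\<close>

lemma set_nn_integral_eq_set_integral:
  fixes f :: "'a \<Rightarrow> real"
  assumes "set_integrable M A f" "\<And>x. x \<in> A \<Longrightarrow> 0 \<le> f x"
  shows "(\<integral>\<^sup>+x\<in>A. ennreal (f x) \<partial>M) = ennreal (\<integral>x\<in>A. f x \<partial>M)"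
proof -
  have "(\<integral>\<^sup>+x\<in>A. ennreal (f x) \<partial>M) = (\<integral>\<^sup>+x. ennreal (indicator A x *\<^sub>R f x) \<partial>M)"
    by (intro nn_integral_cong) (auto simp: indicator_def)
  also have "\<dots> = ennreal (\<integral>x\<in>A. f x \<partial>M)"
    unfolding set_lebesgue_integral_def
    by (rule nn_integral_eq_integral) (use assms in \<open>auto simp: set_integrable_def split: split_indicator\<close>)
  finally show ?thesis .
qed

lemma ennreal_set_integral_square_le:
  fixes g :: "'a \<Rightarrow> real"
  assumes "set_integrable M A g"
  shows "ennreal ((\<integral>x\<in>A. g x \<partial>M)\<^sup>2) \<le> (\<integral>\<^sup>+x\<in>A. ennreal \<bar>g x\<bar> \<partial>M)\<^sup>2"
proof -
  have "ennreal \<bar>\<integral>x\<in>A. g x \<partial>M\<bar> = norm (\<integral>x. indicator A x *\<^sub>R g x \<partial>M)"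
    by (simp add: set_lebesgue_integral_def)
  also have "\<dots> \<le> (\<integral>\<^sup>+x. norm (indicator A x *\<^sub>R g x) \<partial>M)"
    using assms unfolding set_integrable_def by (rule integral_norm_bound_ennreal)
  also have "\<dots> = (\<integral>\<^sup>+x\<in>A. ennreal \<bar>g x\<bar> \<partial>M)"
    by (intro nn_integral_cong) (auto simp: indicator_def)
  finally have "ennreal \<bar>\<integral>x\<in>A. g x \<partial>M\<bar> ^ 2 \<le> (\<integral>\<^sup>+x\<in>A. ennreal \<bar>g x\<bar> \<partial>M)\<^sup>2"
    by (rule power_mono) simp
  then show ?thesis
    by (simp add: ennreal_power)
qed

lemma set_borel_measurable_of_set_integrable_initial_segments:
  fixes g :: "real \<Rightarrow> real"
  assumes "\<And>s. s \<in> {a..<b} \<Longrightarrow> set_integrable lborel {a..s} g"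
  shows "set_borel_measurable lborel {a..<b} g"
proof -
  define c :: "nat \<Rightarrow> real" where "c n = b - 1 / Suc n" for n
  have "\<exists>n. x \<notin> {c n<..<b}" for x
  proof (cases "x < b")
    case True
    obtain n :: nat where "1 / (b - x) < n" using reals_Archimedean2 by blast
    then have "1 / (b - x) < Suc n" by simp
    with True have "x \<notin> {c n<..<b}" by (simp add: c_def field_simps)
    then show ?thesis ..
  qed auto
  then have cover: "space lborel = (\<Union>n. - {c n<..<b})" by auto
  have c_less: "c n < b" for n by (simp add: c_def)
  then have "set_integrable lborel {a..c n} g" for n
    using assms[of "c n"] by (cases "a \<le> c n") (auto simp: set_integrable_def)
  then have meas: "(\<lambda>x. indicator {a..c n} x *\<^sub>R g x) \<in> borel_measurable lborel" for n
    unfolding set_integrable_def by (rule borel_measurable_integrable)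
  have agree: "indicator {a..<b} x *\<^sub>R g x = indicator {a..c n} x *\<^sub>R g x" if "x \<in> - {c n<..<b}" for x n
    using that c_less[of n] by (auto simp: indicator_def)
  show ?thesis
    unfolding set_borel_measurable_def
  proof (rule measurable_piecewise_restrict2[OF _ cover])
    show "\<exists>h \<in> borel_measurable lborel. \<forall>x \<in> - {c n<..<b}. indicator {a..<b} x *\<^sub>R g x = h x" for n
      by (intro bexI[OF _ meas[of n]] ballI agree)
  qed simp
qed

lemma nn_integral_weighted_Cauchy_Schwarz:
  fixes f :: "'a \<Rightarrow> ennreal" and w :: "'a \<Rightarrow> real"
  assumes [measurable]: "f \<in> borel_measurable M" "w \<in> borel_measurable M" "A \<in> sets M"
    and w: "\<And>x. x \<in> A \<Longrightarrow> 0 < w x"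
  shows "(\<integral>\<^sup>+x\<in>A. f x \<partial>M)\<^sup>2 \<le> (\<integral>\<^sup>+x\<in>A. ennreal (1 / w x) \<partial>M) * (\<integral>\<^sup>+x\<in>A. ennreal (w x) * f x ^ 2 \<partial>M)"
proof -
  define F where "F x = ennreal (1 / sqrt (w x)) * indicator A x" for x
  define G where "G x = ennreal (sqrt (w x)) * f x * indicator A x" for x
  have "F x * G x = f x * indicator A x" for x
  proof (cases "x \<in> A")
    case True
    then have "ennreal (1 / sqrt (w x)) * ennreal (sqrt (w x)) = 1"
      using w[OF True] by (subst ennreal_mult[symmetric]) auto
    then show ?thesis using True by (simp add: F_def G_def flip: mult.assoc)
  qed (simp add: F_def G_def)
  then have "(\<integral>\<^sup>+x\<in>A. f x \<partial>M)\<^sup>2 = (\<integral>\<^sup>+x. F x * G x \<partial>M)\<^sup>2" by simp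
  also have "\<dots> \<le> (\<integral>\<^sup>+x. F x ^ 2 \<partial>M) * (\<integral>\<^sup>+x. G x ^ 2 \<partial>M)"
    unfolding F_def G_def by (rule Cauchy_Schwarz_nn_integral) measurable
  also have "\<dots> = (\<integral>\<^sup>+x\<in>A. ennreal (1 / w x) \<partial>M) * (\<integral>\<^sup>+x\<in>A. ennreal (w x) * f x ^ 2 \<partial>M)"
  proof -
    have "F x ^ 2 = ennreal (1 / w x) * indicator A x" for x
      using w[of x] by (cases "x \<in> A") (simp_all add: F_def ennreal_power power_divide)
    moreover have "G x ^ 2 = ennreal (w x) * f x ^ 2 * indicator A x" for x
      using w[of x] by (cases "x \<in> A") (simp_all add: G_def ennreal_power power_mult_distrib)
    ultimately show ?thesis by simp
  qed
  finally show ?thesis .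
qed

lemma nn_integral_two_div_sqrt_one_minus:
  fixes t :: real
  assumes "t \<le> 1"
  shows "(\<integral>\<^sup>+s\<in>{t..1}. ennreal (2 / sqrt (1 - s)) \<partial>lborel) = ennreal (4 * sqrt (1 - t))"
proof -
  have "((\<lambda>s. 2 / sqrt (1 - s)) has_integral (- 4 * sqrt (1 - 1) - (- 4 * sqrt (1 - t)))) {t..1}"
  proof (rule fundamental_theorem_of_calculus_interior)
    show "continuous_on {t..1} (\<lambda>s. - 4 * sqrt (1 - s))"
      by (intro continuous_intros)
    show "((\<lambda>s. - 4 * sqrt (1 - s)) has_vector_derivative 2 / sqrt (1 - x)) (at x)"
      if "x \<in> {t<..<1}" for x
      unfolding has_real_derivative_iff_has_vector_derivative[symmetric]
      using that by (auto intro!: derivative_eq_intros simp: field_simps)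
  qed fact
  then show ?thesis
    by (intro nn_integral_has_integral_lebesgue') simp_all
qed

lemma nn_integral_inverse_one_minus_pow_three_halves:
  fixes s :: real
  assumes "0 \<le> s" "s < 1"
  shows "(\<integral>\<^sup>+t\<in>{0..s}. ennreal (1 / ((1 - t) * sqrt (1 - t))) \<partial>lborel) = ennreal (2 / sqrt (1 - s) - 2)"
proof -
  have "(\<integral>\<^sup>+t\<in>{0..s}. ennreal (1 / ((1 - t) * sqrt (1 - t))) \<partial>lborel) = 2 / sqrt (1 - s) - 2 / sqrt (1 - 0)"
  proof (rule nn_integral_FTC_Icc)
    show "DERIV (\<lambda>t. 2 / sqrt (1 - t)) t :> 1 / ((1 - t) * sqrt (1 - t))" if "t \<in> {0..s}" for t
      using that assms by (auto intro!: derivative_eq_intros simp: field_simps power2_eq_square)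
  qed (use assms in auto)
  then show ?thesis by simp
qed

lemma Hardy_pointwise_bound:
  fixes g :: "real \<Rightarrow> ennreal"
  assumes [measurable]: "g \<in> borel_measurable borel" and s: "0 \<le> s" "s < 1"
  shows "(\<integral>\<^sup>+t\<in>{0..s}. g t \<partial>lborel)\<^sup>2
           \<le> ennreal (2 / sqrt (1 - s)) * (\<integral>\<^sup>+t\<in>{0..s}. ennreal ((1 - t) * sqrt (1 - t)) * g t ^ 2 \<partial>lborel)"
proof -
  have "(\<integral>\<^sup>+t\<in>{0..s}. g t \<partial>lborel)\<^sup>2
      \<le> (\<integral>\<^sup>+t\<in>{0..s}. ennreal (1 / ((1 - t) * sqrt (1 - t))) \<partial>lborel)
        * (\<integral>\<^sup>+t\<in>{0..s}. ennreal ((1 - t) * sqrt (1 - t)) * g t ^ 2 \<partial>lborel)"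
    by (rule nn_integral_weighted_Cauchy_Schwarz) (use s in auto)
  also have "(\<integral>\<^sup>+t\<in>{0..s}. ennreal (1 / ((1 - t) * sqrt (1 - t))) \<partial>lborel) \<le> ennreal (2 / sqrt (1 - s))"
    using s by (simp add: nn_integral_inverse_one_minus_pow_three_halves ennreal_leI)
  finally show ?thesis
    by (simp add: mult_right_mono)
qed

lemma nn_integral_exchange_over_set:
  fixes K W :: "real \<Rightarrow> ennreal"
  assumes [measurable]: "K \<in> borel_measurable borel" "W \<in> borel_measurable borel"
    "D \<in> sets (borel \<Otimes>\<^sub>M borel)"
  shows "(\<integral>\<^sup>+s. K s * (\<integral>\<^sup>+t. W t * indicator D (s, t) \<partial>lborel) \<partial>lborel)
           = (\<integral>\<^sup>+t. W t * (\<integral>\<^sup>+s. K s * indicator D (s, t) \<partial>lborel) \<partial>lborel)"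
proof -
  have "(\<integral>\<^sup>+s. K s * (\<integral>\<^sup>+t. W t * indicator D (s, t) \<partial>lborel) \<partial>lborel)
      = (\<integral>\<^sup>+s. (\<integral>\<^sup>+t. K s * W t * indicator D (s, t) \<partial>lborel) \<partial>lborel)"
    by (intro nn_integral_cong) (subst nn_integral_cmult[symmetric], measurable, simp add: ac_simps)
  also have "\<dots> = (\<integral>\<^sup>+t. (\<integral>\<^sup>+s. K s * W t * indicator D (s, t) \<partial>lborel) \<partial>lborel)"
    by (rule lborel_pair.Fubini'[symmetric]) measurable
  also have "\<dots> = (\<integral>\<^sup>+t. W t * (\<integral>\<^sup>+s. K s * indicator D (s, t) \<partial>lborel) \<partial>lborel)"
    by (intro nn_integral_cong) (subst nn_integral_cmult[symmetric], measurable, simp add: ac_simps)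
  finally show ?thesis .
qed

lemma Hardy_inequality_unit_interval:
  fixes g :: "real \<Rightarrow> ennreal"
  assumes [measurable]: "g \<in> borel_measurable borel"
  shows "(\<integral>\<^sup>+s\<in>{0..<1}. (\<integral>\<^sup>+t\<in>{0..s}. g t \<partial>lborel)\<^sup>2 \<partial>lborel)
           \<le> 4 * (\<integral>\<^sup>+t\<in>{0..<1}. ennreal ((1 - t)\<^sup>2) * g t ^ 2 \<partial>lborel)"
proof -
  define w where "w t = (1 - t) * sqrt (1 - t)" for t :: real
  define K where "K s = ennreal (2 / sqrt (1 - s)) * indicator {0..<1} s" for s :: real
  define D :: "(real \<times> real) set" where "D = {(s, t). 0 \<le> t \<and> t \<le> s}"
  have [measurable]: "w \<in> borel_measurable borel" "K \<in> borel_measurable borel"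
    unfolding w_def[abs_def] K_def[abs_def] by measurable
  have [measurable]: "D \<in> sets (borel \<Otimes>\<^sub>M borel)"
  proof -
    have "{p \<in> space (borel \<Otimes>\<^sub>M borel). 0 \<le> snd p \<and> snd p \<le> (fst p :: real)} \<in> sets (borel \<Otimes>\<^sub>M borel)"
      by measurable
    then show ?thesis unfolding D_def case_prod_beta by (simp add: space_pair_measure)
  qed
  have D_slice: "indicator D (s, t) = (indicator {0..s} t :: ennreal)" for s t
    by (simp add: D_def indicator_def)
  have outer: "(\<integral>\<^sup>+s. K s * indicator D (s, t) \<partial>lborel) \<le> ennreal (4 * sqrt (1 - t)) * indicator {0..<1} t" for t
  proof (cases "t \<in> {0..<1}")
    case True
    have "(\<integral>\<^sup>+s. K s * indicator D (s, t) \<partial>lborel) \<le> (\<integral>\<^sup>+s\<in>{t..1}. ennreal (2 / sqrt (1 - s)) \<partial>lborel)"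
      by (intro nn_integral_mono) (auto simp: K_def D_def indicator_def)
    also have "\<dots> = ennreal (4 * sqrt (1 - t))"
      using True by (intro nn_integral_two_div_sqrt_one_minus) auto
    finally show ?thesis using True by simp
  next
    case False
    then have vanish: "K s * indicator D (s, t) = 0" for s
      by (auto simp: K_def D_def indicator_def)
    show ?thesis unfolding vanish by simp
  qed
  have "(\<integral>\<^sup>+s\<in>{0..<1}. (\<integral>\<^sup>+t\<in>{0..s}. g t \<partial>lborel)\<^sup>2 \<partial>lborel)
      \<le> (\<integral>\<^sup>+s. K s * (\<integral>\<^sup>+t. ennreal (w t) * g t ^ 2 * indicator D (s, t) \<partial>lborel) \<partial>lborel)"
  proof (intro nn_integral_mono)
    fix s :: real
    show "(\<integral>\<^sup>+t\<in>{0..s}. g t \<partial>lborel)\<^sup>2 * indicator {0..<1} s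
        \<le> K s * (\<integral>\<^sup>+t. ennreal (w t) * g t ^ 2 * indicator D (s, t) \<partial>lborel)"
      using Hardy_pointwise_bound[of g s] by (cases "s \<in> {0..<1}") (simp_all add: K_def D_slice w_def)
  qed
  also have "\<dots> = (\<integral>\<^sup>+t. ennreal (w t) * g t ^ 2 * (\<integral>\<^sup>+s. K s * indicator D (s, t) \<partial>lborel) \<partial>lborel)"
    by (rule nn_integral_exchange_over_set) measurable
  also have "\<dots> \<le> (\<integral>\<^sup>+t. ennreal (w t) * g t ^ 2 * (ennreal (4 * sqrt (1 - t)) * indicator {0..<1} t) \<partial>lborel)"
    by (intro nn_integral_mono mult_left_mono outer) simp
  also have "\<dots> = (\<integral>\<^sup>+t\<in>{0..<1}. 4 * (ennreal ((1 - t)\<^sup>2) * g t ^ 2) \<partial>lborel)"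
  proof (intro nn_integral_cong)
    fix t :: real
    have "w t * (4 * sqrt (1 - t)) = 4 * (1 - t) * (sqrt (1 - t))\<^sup>2"
      by (simp only: w_def power2_eq_square mult_ac)
    then have "t < 1 \<Longrightarrow> ennreal (w t) * ennreal (4 * sqrt (1 - t)) = 4 * ennreal ((1 - t)\<^sup>2)"
      by (simp add: w_def power2_eq_square numeral_mult_ennreal flip: ennreal_mult)
    then show "ennreal (w t) * g t ^ 2 * (ennreal (4 * sqrt (1 - t)) * indicator {0..<1} t)
        = 4 * (ennreal ((1 - t)\<^sup>2) * g t ^ 2) * indicator {0..<1} t"
      by (simp add: ac_simps split: split_indicator) (metis mult.left_commute)
  qed
  also have "\<dots> = 4 * (\<integral>\<^sup>+t\<in>{0..<1}. ennreal ((1 - t)\<^sup>2) * g t ^ 2 \<partial>lborel)"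
    by (subst nn_integral_cmult[symmetric]) (measurable, simp add: ac_simps)
  finally show ?thesis .
qed

lemma Hardy_inequality_weak_deriv01:
  assumes "weak_deriv01 u g" "u 0 = 0"
  shows "(\<integral>\<^sup>+s\<in>{0..<1}. ennreal ((u s)\<^sup>2) \<partial>lborel)
           \<le> 4 * (\<integral>\<^sup>+t\<in>{0..<1}. ennreal ((1 - t)\<^sup>2 * (g t)\<^sup>2) \<partial>lborel)"
proof -
  from assms have deriv: "\<And>s. s \<in> {0..<1} \<Longrightarrow> set_integrable lborel {0..s} g \<and> u s = (\<integral>t\<in>{0..s}. g t \<partial>lborel)"
    unfolding weak_deriv01_def by auto
  \<comment> \<open>\<open>g\<close> need not be measurable outside \<open>[0,1)\<close>, so work with the zero extension of \<open>|g|\<close>.\<close>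
  define G where "G t = ennreal \<bar>indicator {0..<1} t *\<^sub>R g t\<bar>" for t
  have "set_borel_measurable lborel {0..<1} g"
    using deriv by (intro set_borel_measurable_of_set_integrable_initial_segments) auto
  then have [measurable]: "G \<in> borel_measurable borel"
    unfolding G_def[abs_def] set_borel_measurable_def by measurable
  have G_eq: "G t = ennreal \<bar>g t\<bar>" if "t \<in> {0..<1}" for t
    using that by (simp add: G_def)
  have "ennreal ((u s)\<^sup>2) \<le> (\<integral>\<^sup>+t\<in>{0..s}. G t \<partial>lborel)\<^sup>2" if s: "s \<in> {0..<1}" for s
  proof -
    have "ennreal ((u s)\<^sup>2) \<le> (\<integral>\<^sup>+t\<in>{0..s}. ennreal \<bar>g t\<bar> \<partial>lborel)\<^sup>2"
      using deriv[OF s] ennreal_set_integral_square_le[of lborel "{0..s}" g] by simp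
    also have "(\<integral>\<^sup>+t\<in>{0..s}. ennreal \<bar>g t\<bar> \<partial>lborel) = (\<integral>\<^sup>+t\<in>{0..s}. G t \<partial>lborel)"
      using s by (intro set_nn_integral_cong) (auto simp: G_eq)
    finally show ?thesis .
  qed
  then have "(\<integral>\<^sup>+s\<in>{0..<1}. ennreal ((u s)\<^sup>2) \<partial>lborel)
      \<le> (\<integral>\<^sup>+s\<in>{0..<1}. (\<integral>\<^sup>+t\<in>{0..s}. G t \<partial>lborel)\<^sup>2 \<partial>lborel)"
    by (intro nn_integral_mono) (simp split: split_indicator)
  also have "\<dots> \<le> 4 * (\<integral>\<^sup>+t\<in>{0..<1}. ennreal ((1 - t)\<^sup>2) * G t ^ 2 \<partial>lborel)"
    by (rule Hardy_inequality_unit_interval) measurable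
  also have "(\<integral>\<^sup>+t\<in>{0..<1}. ennreal ((1 - t)\<^sup>2) * G t ^ 2 \<partial>lborel)
      = (\<integral>\<^sup>+t\<in>{0..<1}. ennreal ((1 - t)\<^sup>2 * (g t)\<^sup>2) \<partial>lborel)"
    by (intro set_nn_integral_cong) (auto simp: G_eq ennreal_power ennreal_mult)
  finally show ?thesis .
qed

lemma admissible_radius_square_lower_bound:
  assumes adm: "admissible_radius eps \<delta> a0 C0 a"
    and small: "C0 * eps\<^sup>2 \<le> 1 / 2"
    and s: "0 \<le> s" "s < 1"
  shows "min (a0\<^sup>2) (1 / 4) * (1 - s) \<le> (a s)\<^sup>2"
proof -
  from adm have a0: "a0 > 0" and interior: "\<forall>s\<in>{0..1-\<delta>}. a0 \<le> a s"
    and boundary: "\<forall>s\<in>{1-\<delta><..1}. \<bar>a s - sqrt (1 - s\<^sup>2)\<bar> \<le> C0 * eps\<^sup>2 * sqrt (1 - s\<^sup>2)"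
    unfolding admissible_radius_def by auto
  show ?thesis
  proof (cases "s \<le> 1 - \<delta>")
    case True
    with interior s a0 have "a0\<^sup>2 \<le> (a s)\<^sup>2" by (intro power_mono) auto
    moreover have "min (a0\<^sup>2) (1 / 4) * (1 - s) \<le> a0\<^sup>2 * 1"
      using s by (intro mult_mono) auto
    ultimately show ?thesis by simp
  next
    case False
    define r where "r = sqrt (1 - s\<^sup>2)"
    have r: "0 \<le> r" "r\<^sup>2 = 1 - s\<^sup>2"
      unfolding r_def using s by (simp_all add: power_le_one)
    from boundary False s have "\<bar>a s - r\<bar> \<le> C0 * eps\<^sup>2 * r" unfolding r_def by auto
    moreover have "C0 * eps\<^sup>2 * r \<le> r / 2" using mult_right_mono[OF small r(1)] by simp
    ultimately have "r / 2 \<le> a s" by linarith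
    then have "(r / 2)\<^sup>2 \<le> (a s)\<^sup>2" using r by (intro power_mono) auto
    moreover have "1 - s \<le> r\<^sup>2"
      using r s by (simp add: power2_eq_square mult_left_le_one_le)
    ultimately have "1 / 4 * (1 - s) \<le> (a s)\<^sup>2" by (simp add: power_divide)
    moreover have "min (a0\<^sup>2) (1 / 4) * (1 - s) \<le> 1 / 4 * (1 - s)"
      using s by (intro mult_right_mono) auto
    ultimately show ?thesis by linarith
  qed
qed

lemma L2norm01_le_if_weight_bound:
  assumes "in_Ha0 a u g" "0 < c"
    and weight: "\<And>s. s \<in> {0..<1} \<Longrightarrow> c * (1 - s) \<le> (a s)\<^sup>2"
  shows "L2norm01 u \<le> 2 / c * L2norm01 (\<lambda>s. (a s)\<^sup>2 * g s)"
proof -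
  from assms(1) have u2: "set_integrable lborel {0<..<1} (\<lambda>s. (u s)\<^sup>2)"
    and ag2: "set_integrable lborel {0<..<1} (\<lambda>s. ((a s)\<^sup>2 * g s)\<^sup>2)"
    and hardy: "(\<integral>\<^sup>+s\<in>{0..<1}. ennreal ((u s)\<^sup>2) \<partial>lborel)
                  \<le> 4 * (\<integral>\<^sup>+t\<in>{0..<1}. ennreal ((1 - t)\<^sup>2 * (g t)\<^sup>2) \<partial>lborel)"
    unfolding in_Ha0_def in_Ha_def sq_int01_def by (auto intro: Hardy_inequality_weak_deriv01)
  define X where "X = (\<integral>s\<in>{0<..<1}. (u s)\<^sup>2 \<partial>lborel)"
  define Y where "Y = (\<integral>s\<in>{0<..<1}. ((a s)\<^sup>2 * g s)\<^sup>2 \<partial>lborel)"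
  have Y_nonneg: "0 \<le> Y"
    unfolding Y_def set_lebesgue_integral_def by (auto intro: Bochner_Integration.integral_nonneg)
  have pointwise: "(1 - t)\<^sup>2 * (g t)\<^sup>2 \<le> ((a t)\<^sup>2 * g t)\<^sup>2 / c\<^sup>2" if "t \<in> {0..<1}" for t
  proof -
    have "(c * (1 - t))\<^sup>2 \<le> ((a t)\<^sup>2)\<^sup>2"
      using that weight \<open>0 < c\<close> by (intro power_mono) auto
    then have "(c * (1 - t))\<^sup>2 * (g t)\<^sup>2 \<le> ((a t)\<^sup>2)\<^sup>2 * (g t)\<^sup>2"
      by (rule mult_right_mono) simp
    then have "c\<^sup>2 * ((1 - t)\<^sup>2 * (g t)\<^sup>2) \<le> ((a t)\<^sup>2 * g t)\<^sup>2"
      by (simp only: power_mult_distrib mult_ac)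
    then show ?thesis
      using \<open>0 < c\<close> by (simp add: field_simps)
  qed
  have "ennreal X = (\<integral>\<^sup>+s\<in>{0<..<1}. ennreal ((u s)\<^sup>2) \<partial>lborel)"
    unfolding X_def by (rule set_nn_integral_eq_set_integral[symmetric, OF u2]) auto
  also have "\<dots> \<le> (\<integral>\<^sup>+s\<in>{0..<1}. ennreal ((u s)\<^sup>2) \<partial>lborel)"
    by (rule nn_set_integral_set_mono) auto
  also note hardy
  also have "(\<integral>\<^sup>+t\<in>{0..<1}. ennreal ((1 - t)\<^sup>2 * (g t)\<^sup>2) \<partial>lborel)
      \<le> (\<integral>\<^sup>+t\<in>{0..<1}. ennreal (((a t)\<^sup>2 * g t)\<^sup>2 / c\<^sup>2) \<partial>lborel)"
    using pointwise by (intro nn_integral_mono) (simp add: ennreal_leI split: split_indicator)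
  also have "\<dots> = (\<integral>\<^sup>+t\<in>{0<..<1}. ennreal (((a t)\<^sup>2 * g t)\<^sup>2 / c\<^sup>2) \<partial>lborel)"
    by (intro nn_integral_cong_AE eventually_mono[OF AE_lborel_singleton[of 0]])
      (auto simp: indicator_def)
  also have "\<dots> = ennreal (Y / c\<^sup>2)"
    unfolding Y_def using ag2 by (subst set_nn_integral_eq_set_integral) auto
  finally have "ennreal X \<le> ennreal (4 / c\<^sup>2 * Y)"
    using Y_nonneg by (simp add: numeral_mult_ennreal mult_left_mono)
  then have "X \<le> 4 / c\<^sup>2 * Y"
    using Y_nonneg by simp
  then have "sqrt X \<le> sqrt (4 / c\<^sup>2 * Y)"
    by simp
  also have "\<dots> = 2 / c * sqrt Y"
    using \<open>0 < c\<close> by (simp add: real_sqrt_mult real_sqrt_divide)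
  finally show ?thesis
    unfolding L2norm01_def X_def Y_def .
qed

theorem lemma4p1:
  fixes \<delta> a0 C0 :: real
  shows "\<exists>eps0>0. \<exists>C. \<forall>eps a u g.
           0 < eps \<and> eps < eps0 \<and> admissible_radius eps \<delta> a0 C0 a \<and> in_Ha0 a u g \<longrightarrow>
           L2norm01 u \<le> C * L2norm01 (\<lambda>s. (a s)\<^sup>2 * g s)"
proof -
  define eps0 where "eps0 = 1 / sqrt (2 * (\<bar>C0\<bar> + 1))"
  define c where "c = min (a0\<^sup>2) (1 / 4)"
  have "L2norm01 u \<le> 2 / c * L2norm01 (\<lambda>s. (a s)\<^sup>2 * g s)"
    if eps: "0 < eps" "eps < eps0" and adm: "admissible_radius eps \<delta> a0 C0 a" and u: "in_Ha0 a u g"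
    for eps a u g
  proof (rule L2norm01_le_if_weight_bound[OF u])
    show "0 < c"
      using adm by (simp add: c_def admissible_radius_def)
    have "eps\<^sup>2 \<le> eps0\<^sup>2"
      using eps by (intro power_mono) auto
    then have "(\<bar>C0\<bar> + 1) * eps\<^sup>2 \<le> 1 / 2"
      by (simp add: eps0_def field_simps)
    moreover have "C0 * eps\<^sup>2 \<le> (\<bar>C0\<bar> + 1) * eps\<^sup>2"
      by (intro mult_right_mono) auto
    ultimately have "C0 * eps\<^sup>2 \<le> 1 / 2"
      by linarith
    then show "c * (1 - s) \<le> (a s)\<^sup>2" if "s \<in> {0..<1}" for s
      using that unfolding c_def by (intro admissible_radius_square_lower_bound[OF adm]) auto
  qed
  moreover have "0 < eps0"
    by (simp add: eps0_def add_pos_nonneg)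
  ultimately show ?thesis
    by blast
qed

end
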